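(* Let $\mathbf A=(A,b,c,V)\in\mathcal B_{\mu,M}(\Omega)$, where $V\in L^1_{\rm loc}(\Omega)$ is nonnegative, let $V_m=\min\{V,m\}$ and $\mathbf A_m=(A,b,c,V_m)$ for $m\in\mathbb N_+$, and let $p\in(1,\infty)$, $q=p/(p-1)$. Then: (i) for every $\varepsilon\in(0,\mu)$ there exists $m_\varepsilon\ge0$ such that $\mathbf A_m\in\mathcal B_{\mu-\varepsilon,M}(\Omega)$ for all $m\ge m_\varepsilon$; (ii) if $\mathbf A\in\mathcal S_p(\Omega)$, then for every $\varepsilon\in(0,\mu_p(\mathbf A))$ there exists $m_{\varepsilon,p}\ge0$ such that $\mathbf A_m\in\mathcal S_p(\Omega)$ and $\mu_p(\mathbf A_m)\ge\mu_p(\mathbf A)-\varepsilon$ for all $m\ge m_{\varepsilon,p}$; moreover $\lim_{m\to\infty}\mu_p(\mathbf A_m)=\mu_p(\mathbf A)$. In particular, if $\mathbf A\in\mathcal B_p(\Omega)$, then $\mathbf A_m\in\mathcal B_p(\Omega)$ for all sufficiently large $m$ (namely $m\ge\max\{m_{\varepsilon,p},m_{\varepsilon,q}\}$).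
   Context: $\Omega\subseteq\mathbb R^d$ nonempty open; $\langle \xi,\sigma\rangle=\sum_j\xi_j\overline{\sigma_j}$. $\mathcal{A}(\Omega)$: measurable $A:\Omega\to\mathbb{C}^{d\times d}$ with $\lambda,\Lambda>0$ such that $\Re\langle A(x)\xi,\xi\rangle\ge\lambda|\xi|^2$, $|\langle A(x)\xi,\sigma\rangle|\le\Lambda|\xi||\sigma|$ a.e. $\mathcal{J}_s\xi=\frac s2(\xi+(1-\frac2s)\overline\xi)$, $\Delta_s(A)=\operatorname{ess\,inf}_{x}\min_{|\xi|=1}\Re\langle A(x)\xi,\xi+|1-2/s|\overline\xi\rangle$, $\mathcal A_s=\{A\in\mathcal A(\Omega):\Delta_s(A)>0\}$, $\Gamma_s^{\mathbf A}(x,\xi)=\Re\langle A\xi,\mathcal J_s\xi\rangle+\Re\langle b+\mathcal J_sc,\xi\rangle+V$, for quadruples $\mathbf A=(A,b,c,V)$ with $A\in\mathcal A(\Omega)$, $b,c\in L^\infty(\Omega;\mathbb C^d)$, $0\le V\in L^1_{\rm loc}(\Omega)$. $\mathcal B_{\mu,M}(\Omega)$ ($\mu\in(0,1]$, $M>0$): such quadruples with $\Gamma_2^{\mathbf A}(x,\xi)\ge\mu(|\xi|^2+V(x))$ and $|b(x)-c(x)|\le M\sqrt{V(x)}$ for a.e. $x$, all $\xi$. $\mathcal S_s(\Omega)$: quadruples with $A\in\mathcal A_s(\Omega)$, $|b-c|\le M'\sqrt V$ a.e. for some $M'>0$, and $\Gamma_s^{\mathbf A}\ge\mu'(|\xi|^2+V)$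 a.e. for some $\mu'>0$; $\mu_s(\mathbf A)$ the largest such $\mu'$. $\mathcal B_p=\mathcal S_p\cap\mathcal S_q$. *)

theory Defs
  imports "HOL-Analysis.Analysis"
begin

text \<open>Complex vectors in C^d are modelled as complex^'n, matrices as complex^'n^'n,
  points of R^d as real^'n; the dimension d = CARD('n) is arbitrary.\<close>

definition cinner :: "complex^'n \<Rightarrow> complex^'n \<Rightarrow> complex" where
  "cinner \<xi> \<sigma> = (\<Sum>j\<in>UNIV. \<xi> $ j * cnj (\<sigma> $ j))"

definition vcnj :: "complex^'n \<Rightarrow> complex^'n" where
  "vcnj \<xi> = (\<chi> j. cnj (\<xi> $ j))"

definition Jop :: "real \<Rightarrow> complex^'n \<Rightarrow> complex^'n" where
  "Jop s \<xi> = (s / 2) *\<^sub>R (\<xi> + (1 - 2 / s) *\<^sub>R vcnj \<xi>)"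

abbreviation AE_on :: "(real^'n) set \<Rightarrow> (real^'n \<Rightarrow> bool) \<Rightarrow> bool" where
  "AE_on \<Omega> P \<equiv> (AE x in lebesgue. x \<in> \<Omega> \<longrightarrow> P x)"

definition ellipticA :: "(real^'n) set \<Rightarrow> (real^'n \<Rightarrow> complex^'n^'n) \<Rightarrow> bool" where
  "ellipticA \<Omega> A \<longleftrightarrow> A \<in> borel_measurable (lebesgue_on \<Omega>) \<and>
     (\<exists>lam>0. \<exists>Lam>0. AE_on \<Omega> (\<lambda>x. \<forall>\<xi> \<sigma>.
        Re (cinner (A x *v \<xi>) \<xi>) \<ge> lam * (norm \<xi>)\<^sup>2 \<and>
        cmod (cinner (A x *v \<xi>) \<sigma>) \<le> Lam * norm \<xi> * norm \<sigma>))"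

text \<open>\<Delta>_s(A) = ess inf over x of min over unit \<xi>; ess inf = sup of a.e. lower bounds\<close>
definition Delta :: "real \<Rightarrow> (real^'n) set \<Rightarrow> (real^'n \<Rightarrow> complex^'n^'n) \<Rightarrow> real" where
  "Delta s \<Omega> A = Sup {\<delta>. AE_on \<Omega> (\<lambda>x. \<forall>\<xi>. norm \<xi> = 1 \<longrightarrow>
      \<delta> \<le> Re (cinner (A x *v \<xi>) (\<xi> + \<bar>1 - 2 / s\<bar> *\<^sub>R vcnj \<xi>)))}"

definition ellipticA_s :: "real \<Rightarrow> (real^'n) set \<Rightarrow> (real^'n \<Rightarrow> complex^'n^'n) \<Rightarrow> bool" where
  "ellipticA_s s \<Omega> A \<longleftrightarrow> ellipticA \<Omega> A \<and> Delta s \<Omega> A > 0"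

definition Linfty :: "(real^'n) set \<Rightarrow> (real^'n \<Rightarrow> complex^'n) \<Rightarrow> bool" where
  "Linfty \<Omega> b \<longleftrightarrow> b \<in> borel_measurable (lebesgue_on \<Omega>) \<and>
     (\<exists>C. AE_on \<Omega> (\<lambda>x. norm (b x) \<le> C))"

definition L1loc :: "(real^'n) set \<Rightarrow> (real^'n \<Rightarrow> real) \<Rightarrow> bool" where
  "L1loc \<Omega> V \<longleftrightarrow> (\<forall>K. compact K \<and> K \<subseteq> \<Omega> \<longrightarrow> set_integrable lebesgue K V)"

definition quadruple ::
  "(real^'n) set \<Rightarrow> (real^'n \<Rightarrow> complex^'n^'n) \<Rightarrow> (real^'n \<Rightarrow> complex^'n) \<Rightarrow>
   (real^'n \<Rightarrow> complex^'n) \<Rightarrow> (real^'n \<Rightarrow> real) \<Rightarrow> bool" where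
  "quadruple \<Omega> A b c V \<longleftrightarrow> ellipticA \<Omega> A \<and> Linfty \<Omega> b \<and> Linfty \<Omega> c \<and>
     L1loc \<Omega> V \<and> AE_on \<Omega> (\<lambda>x. 0 \<le> V x)"

definition Gamma ::
  "real \<Rightarrow> (real^'n \<Rightarrow> complex^'n^'n) \<Rightarrow> (real^'n \<Rightarrow> complex^'n) \<Rightarrow>
   (real^'n \<Rightarrow> complex^'n) \<Rightarrow> (real^'n \<Rightarrow> real) \<Rightarrow> real^'n \<Rightarrow> complex^'n \<Rightarrow> real" where
  "Gamma s A b c V x \<xi> = Re (cinner (A x *v \<xi>) (Jop s \<xi>))
      + Re (cinner (b x + Jop s (c x)) \<xi>) + V x"

definition classB ::
  "real \<Rightarrow> real \<Rightarrow> (real^'n) set \<Rightarrow> (real^'n \<Rightarrow> complex^'n^'n) \<Rightarrow> (real^'n \<Rightarrow> complex^'n) \<Rightarrow>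
   (real^'n \<Rightarrow> complex^'n) \<Rightarrow> (real^'n \<Rightarrow> real) \<Rightarrow> bool" where
  "classB \<mu> M \<Omega> A b c V \<longleftrightarrow> quadruple \<Omega> A b c V \<and>
     AE_on \<Omega> (\<lambda>x. (\<forall>\<xi>. Gamma 2 A b c V x \<xi> \<ge> \<mu> * ((norm \<xi>)\<^sup>2 + V x)) \<and>
                    norm (b x - c x) \<le> M * sqrt (V x))"

definition classS ::
  "real \<Rightarrow> (real^'n) set \<Rightarrow> (real^'n \<Rightarrow> complex^'n^'n) \<Rightarrow> (real^'n \<Rightarrow> complex^'n) \<Rightarrow>
   (real^'n \<Rightarrow> complex^'n) \<Rightarrow> (real^'n \<Rightarrow> real) \<Rightarrow> bool" where
  "classS s \<Omega> A b c V \<longleftrightarrow> quadruple \<Omega> A b c V \<and> ellipticA_s s \<Omega> A \<and>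
     (\<exists>M'>0. AE_on \<Omega> (\<lambda>x. norm (b x - c x) \<le> M' * sqrt (V x))) \<and>
     (\<exists>\<mu>'>0. AE_on \<Omega> (\<lambda>x. \<forall>\<xi>. Gamma s A b c V x \<xi> \<ge> \<mu>' * ((norm \<xi>)\<^sup>2 + V x)))"

definition mu_s ::
  "real \<Rightarrow> (real^'n) set \<Rightarrow> (real^'n \<Rightarrow> complex^'n^'n) \<Rightarrow> (real^'n \<Rightarrow> complex^'n) \<Rightarrow>
   (real^'n \<Rightarrow> complex^'n) \<Rightarrow> (real^'n \<Rightarrow> real) \<Rightarrow> real" where
  "mu_s s \<Omega> A b c V = Sup {\<mu>'. \<mu>' > 0 \<and>
     AE_on \<Omega> (\<lambda>x. \<forall>\<xi>. Gamma s A b c V x \<xi> \<ge> \<mu>' * ((norm \<xi>)\<^sup>2 + V x))}"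

definition classBp ::
  "real \<Rightarrow> (real^'n) set \<Rightarrow> (real^'n \<Rightarrow> complex^'n^'n) \<Rightarrow> (real^'n \<Rightarrow> complex^'n) \<Rightarrow>
   (real^'n \<Rightarrow> complex^'n) \<Rightarrow> (real^'n \<Rightarrow> real) \<Rightarrow> bool" where
  "classBp p \<Omega> A b c V \<longleftrightarrow> classS p \<Omega> A b c V \<and> classS (p / (p - 1)) \<Omega> A b c V"

end

theory Submission
  imports Defs
begin

text \<open>Fix \<open>x\<close> and write \<open>\<Gamma>(\<xi>) = Q \<xi> + L \<xi> + V\<close> with \<open>Q\<close> quadratic and
  \<open>|L \<xi>| \<le> C |\<xi>|\<close>, where \<open>C\<close> is uniform in \<open>x\<close> because \<open>b, c \<in> L\<^sup>\<infinity>\<close>. Scaling \<open>\<xi>\<close>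
  shows that \<open>\<Gamma> \<ge> \<mu> (|\<xi>|\<^sup>2 + V)\<close> forces \<open>Q \<xi> \<ge> \<mu> |\<xi>|\<^sup>2\<close>, and \<open>\<xi> = 0\<close> forces
  \<open>\<mu> \<le> 1\<close> where \<open>V > 0\<close>. Hence where \<open>V > m\<close> the truncated form satisfies
  \<open>\<Gamma>\<^sub>m(\<xi>) \<ge> \<mu> |\<xi>|\<^sup>2 - C |\<xi>| + m \<ge> (\<mu> - \<delta>) (|\<xi>|\<^sup>2 + m)\<close> as soon as \<open>C\<^sup>2 \<le> 4 \<delta>\<^sup>2 m\<close>
  (complete the square), and \<open>|b - c| \<le> M \<surd>m\<close> once \<open>M \<surd>m\<close> exceeds the \<open>L\<^sup>\<infinity>\<close> bounds.
  Conversely every coercivity constant of \<open>A\<^sub>m\<close> is one of \<open>A\<close>, so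
  \<open>\<mu>\<^sub>s(A\<^sub>m) \<le> \<mu>\<^sub>s(A)\<close>; together the two bounds give \<open>\<mu>\<^sub>s(A\<^sub>m) \<rightarrow> \<mu>\<^sub>s(A)\<close>.\<close>

lemma quadratic_nonneg_imp_leading_coeff_nonneg:
  fixes \<alpha> \<beta> \<gamma> :: real
  assumes "\<And>t. 0 \<le> \<alpha> * t\<^sup>2 + \<beta> * t + \<gamma>"
  shows "0 \<le> \<alpha>"
proof (rule ccontr)
  assume "\<not> 0 \<le> \<alpha>"
  define t where "t = max 1 ((\<bar>\<beta>\<bar> + \<bar>\<gamma>\<bar> + 1) / (- \<alpha>))"
  have "1 \<le> t" and "\<alpha> * t \<le> - (\<bar>\<beta>\<bar> + \<bar>\<gamma>\<bar> + 1)"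
    using \<open>\<not> 0 \<le> \<alpha>\<close> by (auto simp: t_def field_simps max_def)
  then have "\<alpha> * t\<^sup>2 \<le> - (\<bar>\<beta>\<bar> + \<bar>\<gamma>\<bar> + 1) * t"
    by (simp add: power2_eq_square mult.assoc[symmetric] mult_right_mono)
  moreover have "\<beta> * t \<le> \<bar>\<beta>\<bar> * t" and "\<gamma> \<le> \<bar>\<gamma>\<bar> * t"
    using \<open>1 \<le> t\<close> by (auto intro: mult_right_mono order_trans[OF abs_ge_self, of _ "\<bar>\<gamma>\<bar> * t"]
        simp: mult_le_cancel_left1)
  ultimately have "\<alpha> * t\<^sup>2 + \<beta> * t + \<gamma> \<le> - t"
    by (simp add: algebra_simps)
  with assms[of t] \<open>1 \<le> t\<close> show False by linarith
qed

lemma coercive_form_principal_part: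
  fixes Q L :: "'a::real_normed_vector \<Rightarrow> real"
  assumes Q_hom: "\<And>t \<xi>. Q (t *\<^sub>R \<xi>) = t\<^sup>2 * Q \<xi>"
    and L_hom: "\<And>t \<xi>. L (t *\<^sub>R \<xi>) = t * L \<xi>"
    and coercive: "\<And>\<xi>. \<mu> * ((norm \<xi>)\<^sup>2 + v) \<le> Q \<xi> + L \<xi> + v"
  shows "\<mu> * (norm \<xi>)\<^sup>2 \<le> Q \<xi>"
proof -
  have "0 \<le> (Q \<xi> - \<mu> * (norm \<xi>)\<^sup>2) * t\<^sup>2 + L \<xi> * t + (v - \<mu> * v)" for t
    using coercive[of "t *\<^sub>R \<xi>"]
    by (simp add: Q_hom L_hom power_mult_distrib algebra_simps)
  then have "0 \<le> Q \<xi> - \<mu> * (norm \<xi>)\<^sup>2"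
    by (rule quadratic_nonneg_imp_leading_coeff_nonneg)
  then show ?thesis by simp
qed

lemma coercive_form_truncate:
  fixes Q L :: "'a::real_normed_vector \<Rightarrow> real"
  assumes Q_hom: "\<And>t \<xi>. Q (t *\<^sub>R \<xi>) = t\<^sup>2 * Q \<xi>"
    and L_hom: "\<And>t \<xi>. L (t *\<^sub>R \<xi>) = t * L \<xi>"
    and L_bound: "\<And>\<xi>. \<bar>L \<xi>\<bar> \<le> C * norm \<xi>"
    and coercive: "\<And>\<xi>. \<mu> * ((norm \<xi>)\<^sup>2 + v) \<le> Q \<xi> + L \<xi> + v"
    and "0 \<le> v" and "0 < \<delta>" and level: "C\<^sup>2 \<le> 4 * \<delta>\<^sup>2 * m"
  shows "(\<mu> - \<delta>) * ((norm \<xi>)\<^sup>2 + min v m) \<le> Q \<xi> + L \<xi> + min v m"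
proof (cases "v \<le> m")
  case True
  have "0 \<le> \<delta> * ((norm \<xi>)\<^sup>2 + v)"
    using \<open>0 \<le> v\<close> \<open>0 < \<delta>\<close> by simp
  then show ?thesis
    using coercive[of \<xi>] True by (simp add: left_diff_distrib)
next
  case False
  have "0 \<le> 4 * \<delta>\<^sup>2 * m"
    using level zero_le_power2[of C] by linarith
  then have "0 \<le> m"
    using \<open>0 < \<delta>\<close> by (simp add: zero_le_mult_iff)
  have "Q 0 = 0" and "L 0 = 0"
    using Q_hom[of 0 0] L_hom[of 0 0] by simp_all
  then have "\<mu> * v \<le> v"
    using coercive[of 0] by simp
  then have "\<mu> \<le> 1"
    using False \<open>0 \<le> m\<close> by (simp add: mult_le_cancel_right1)
  then have "\<mu> * m \<le> m"
    using mult_right_mono[of \<mu> 1 m] \<open>0 \<le> m\<close> by simp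
  define n where "n = norm \<xi>"
  have "0 \<le> (2 * \<delta> * n - C)\<^sup>2 + (4 * \<delta>\<^sup>2 * m - C\<^sup>2)"
    using level by simp
  also have "\<dots> = 4 * \<delta> * (\<delta> * n\<^sup>2 - C * n + \<delta> * m)"
    by (simp add: power2_eq_square algebra_simps)
  finally have "C * n \<le> \<delta> * n\<^sup>2 + \<delta> * m"
    using \<open>0 < \<delta>\<close> by (simp add: zero_le_mult_iff)
  moreover have "Q \<xi> \<ge> \<mu> * n\<^sup>2" and "L \<xi> \<ge> - C * n"
    using coercive_form_principal_part[OF Q_hom L_hom coercive] L_bound[of \<xi>]
    by (auto simp: n_def)
  moreover have "(\<mu> - \<delta>) * (n\<^sup>2 + m) = \<mu> * n\<^sup>2 + \<mu> * m - (\<delta> * n\<^sup>2 + \<delta> * m)"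
    by (simp add: algebra_simps)
  ultimately show ?thesis
    using \<open>\<mu> * m \<le> m\<close> False by (simp add: n_def[symmetric])
qed

lemma coercive_form_untruncate:
  fixes P :: "'a::real_normed_vector \<Rightarrow> real"
  assumes "P 0 = 0" and "0 < m"
    and coercive: "\<And>\<xi>. \<mu> * ((norm \<xi>)\<^sup>2 + min v m) \<le> P \<xi> + min v m"
  shows "\<mu> * ((norm \<xi>)\<^sup>2 + v) \<le> P \<xi> + v"
proof (cases "v \<le> m")
  case True
  then show ?thesis using coercive[of \<xi>] by simp
next
  case False
  then have "\<mu> * m \<le> m"
    using coercive[of 0] \<open>P 0 = 0\<close> by simp
  then have "\<mu> \<le> 1"
    using \<open>0 < m\<close> by (simp add: mult_le_cancel_right1)
  then have "\<mu> * (v - m) \<le> v - m"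
    using mult_right_mono[of \<mu> 1 "v - m"] False by simp
  moreover have "\<mu> * ((norm \<xi>)\<^sup>2 + v) = \<mu> * ((norm \<xi>)\<^sup>2 + m) + \<mu> * (v - m)"
    by (simp add: algebra_simps)
  moreover have "\<mu> * ((norm \<xi>)\<^sup>2 + m) \<le> P \<xi> + m"
    using coercive[of \<xi>] False by simp
  ultimately show ?thesis
    by linarith
qed

lemma Re_cinner: "Re (cinner \<xi> \<sigma>) = inner \<xi> \<sigma>"
  by (simp add: cinner_def inner_vec_def inner_complex_def Re_sum)

lemma norm_vcnj [simp]: "norm (vcnj \<xi>) = norm \<xi>"
  by (simp add: vcnj_def norm_vec_def)

lemma vcnj_scaleR: "vcnj (t *\<^sub>R \<xi>) = t *\<^sub>R vcnj \<xi>"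
  by (simp add: vcnj_def vec_eq_iff)

lemma Jop_scaleR: "Jop s (t *\<^sub>R \<xi>) = t *\<^sub>R Jop s \<xi>"
  by (simp add: Jop_def vcnj_scaleR algebra_simps)

lemma norm_Jop_le: "norm (Jop s \<xi>) \<le> \<bar>s / 2\<bar> * (1 + \<bar>1 - 2 / s\<bar>) * norm \<xi>"
proof -
  have "norm (Jop s \<xi>) = \<bar>s / 2\<bar> * norm (\<xi> + (1 - 2 / s) *\<^sub>R vcnj \<xi>)"
    by (simp add: Jop_def)
  also have "\<dots> \<le> \<bar>s / 2\<bar> * (norm \<xi> + \<bar>1 - 2 / s\<bar> * norm \<xi>)"
    by (intro mult_left_mono order_trans[OF norm_triangle_ineq]) auto
  finally show ?thesis
    by (simp add: algebra_simps)
qed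

lemma matrix_vector_mult_scaleR_complex: "(A :: complex^'n^'m) *v (t *\<^sub>R \<xi>) = t *\<^sub>R (A *v \<xi>)"
  by (simp add: matrix_vector_mult_def vec_eq_iff scaleR_sum_right)

lemma Gamma_eq_inner:
  "Gamma s A b c V x \<xi> = inner (A x *v \<xi>) (Jop s \<xi>) + inner (b x + Jop s (c x)) \<xi> + V x"
  by (simp add: Gamma_def Re_cinner)

lemma Gamma_principal_part_hom:
  "inner (A x *v (t *\<^sub>R \<xi>)) (Jop s (t *\<^sub>R \<xi>)) = t\<^sup>2 * inner (A x *v \<xi>) (Jop s \<xi>)"
  by (simp add: matrix_vector_mult_scaleR_complex Jop_scaleR power2_eq_square)

lemma Gamma_zero: "Gamma s A b c V x 0 = V x"
  using Gamma_principal_part_hom[where t = 0 and \<xi> = 0] by (simp add: Gamma_eq_inner)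

definition coercive ::
  "real \<Rightarrow> (real^'n) set \<Rightarrow> (real^'n \<Rightarrow> complex^'n^'n) \<Rightarrow> (real^'n \<Rightarrow> complex^'n) \<Rightarrow>
   (real^'n \<Rightarrow> complex^'n) \<Rightarrow> (real^'n \<Rightarrow> real) \<Rightarrow> real \<Rightarrow> bool" where
  "coercive s \<Omega> A b c V \<mu>' \<longleftrightarrow>
     AE_on \<Omega> (\<lambda>x. \<forall>\<xi>. \<mu>' * ((norm \<xi>)\<^sup>2 + V x) \<le> Gamma s A b c V x \<xi>)"

lemma mu_s_eq_Sup_coercive: "mu_s s \<Omega> A b c V = Sup {\<mu>'. 0 < \<mu>' \<and> coercive s \<Omega> A b c V \<mu>'}"
  by (simp add: mu_s_def coercive_def)

lemma first_order_part_bounded: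
  assumes "Linfty \<Omega> b" and "Linfty \<Omega> c"
  obtains C where "AE_on \<Omega> (\<lambda>x. \<forall>\<xi>. \<bar>inner (b x + Jop s (c x)) \<xi>\<bar> \<le> C * norm \<xi>)"
proof -
  obtain Cb Cc where "AE_on \<Omega> (\<lambda>x. norm (b x) \<le> Cb)" and "AE_on \<Omega> (\<lambda>x. norm (c x) \<le> Cc)"
    using assms by (auto simp: Linfty_def)
  define K where "K = \<bar>s / 2\<bar> * (1 + \<bar>1 - 2 / s\<bar>)"
  have "K \<ge> 0"
    by (simp add: K_def)
  from \<open>AE_on \<Omega> (\<lambda>x. norm (b x) \<le> Cb)\<close> \<open>AE_on \<Omega> (\<lambda>x. norm (c x) \<le> Cc)\<close>
  have "AE_on \<Omega> (\<lambda>x. \<forall>\<xi>. \<bar>inner (b x + Jop s (c x)) \<xi>\<bar> \<le> (Cb + K * Cc) * norm \<xi>)"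
  proof eventually_elim
    case (elim x)
    show ?case
    proof (intro impI allI)
      fix \<xi> assume "x \<in> \<Omega>"
      have "norm (b x + Jop s (c x)) \<le> norm (b x) + norm (Jop s (c x))"
        by (rule norm_triangle_ineq)
      also have "\<dots> \<le> Cb + K * norm (c x)"
        using elim \<open>x \<in> \<Omega>\<close> norm_Jop_le[of s "c x"] by (simp add: K_def)
      also have "\<dots> \<le> Cb + K * Cc"
        using elim \<open>x \<in> \<Omega>\<close> \<open>K \<ge> 0\<close> by (simp add: mult_left_mono)
      finally show "\<bar>inner (b x + Jop s (c x)) \<xi>\<bar> \<le> (Cb + K * Cc) * norm \<xi>"
        by (rule order_trans[OF Cauchy_Schwarz_ineq2 mult_right_mono[OF _ norm_ge_zero]])
    qed
  qed
  then show ?thesis using that by blast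
qed

lemma AE_on_open_obtain:
  assumes "open \<Omega>" and "\<Omega> \<noteq> {}" and "AE_on \<Omega> P"
  obtains x where "x \<in> \<Omega>" and "P x"
proof (rule ccontr)
  assume "\<not> thesis"
  with that have "\<forall>x\<in>\<Omega>. \<not> P x"
    by blast
  with assms(3) have "AE x in lebesgue. x \<notin> \<Omega>"
    by (auto elim: eventually_mono)
  then have "\<Omega> \<in> null_sets lebesgue"
    using AE_iff_null_sets[of \<Omega> lebesgue] \<open>open \<Omega>\<close> by simp
  then show False
    using open_not_negligible[OF assms(1,2)] by (simp add: negligible_iff_null_sets)
qed

lemma coercive_truncate:
  assumes "Linfty \<Omega> b" and "Linfty \<Omega> c" and "AE_on \<Omega> (\<lambda>x. 0 \<le> V x)"
    and "coercive s \<Omega> A b c V \<mu>'" and "0 < \<delta>"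
  shows "\<forall>\<^sub>F m in at_top. coercive s \<Omega> A b c (\<lambda>x. min (V x) m) (\<mu>' - \<delta>)"
proof -
  obtain C where C: "AE_on \<Omega> (\<lambda>x. \<forall>\<xi>. \<bar>inner (b x + Jop s (c x)) \<xi>\<bar> \<le> C * norm \<xi>)"
    using first_order_part_bounded[OF assms(1,2)] .
  show ?thesis
    using eventually_ge_at_top[of "C\<^sup>2 / (4 * \<delta>\<^sup>2)"]
  proof eventually_elim
    case (elim m)
    then have level: "C\<^sup>2 \<le> 4 * \<delta>\<^sup>2 * m"
      using \<open>0 < \<delta>\<close> by (simp add: field_simps)
    from C assms(3) assms(4)[unfolded coercive_def]
    show ?case
      unfolding coercive_def
    proof eventually_elim
      case (elim x)
      show ?case
      proof (intro impI allI)
        fix \<xi> assume "x \<in> \<Omega>"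
        have "\<mu>' * ((norm \<eta>)\<^sup>2 + V x)
                \<le> inner (A x *v \<eta>) (Jop s \<eta>) + inner (b x + Jop s (c x)) \<eta> + V x" for \<eta>
          using elim \<open>x \<in> \<Omega>\<close> by (simp add: Gamma_eq_inner)
        then have "(\<mu>' - \<delta>) * ((norm \<xi>)\<^sup>2 + min (V x) m)
            \<le> inner (A x *v \<xi>) (Jop s \<xi>) + inner (b x + Jop s (c x)) \<xi> + min (V x) m"
          using elim \<open>x \<in> \<Omega>\<close> \<open>0 < \<delta>\<close> level
          by (intro coercive_form_truncate[OF Gamma_principal_part_hom inner_scaleR_right]) auto
        then show "(\<mu>' - \<delta>) * ((norm \<xi>)\<^sup>2 + min (V x) m)
                          \<le> Gamma s A b c (\<lambda>x. min (V x) m) x \<xi>"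
          by (simp add: Gamma_eq_inner)
      qed
    qed
  qed
qed

lemma coercive_untruncate:
  assumes "coercive s \<Omega> A b c (\<lambda>x. min (V x) m) \<mu>'" and "0 < m"
  shows "coercive s \<Omega> A b c V \<mu>'"
  using assms(1) unfolding coercive_def
proof eventually_elim
  case (elim x)
  show ?case
  proof (intro impI allI)
    fix \<xi> assume "x \<in> \<Omega>"
    have "\<mu>' * ((norm \<xi>)\<^sup>2 + V x) \<le> (Gamma s A b c V x \<xi> - V x) + V x"
    proof (rule coercive_form_untruncate[where m = m])
      show "Gamma s A b c V x 0 - V x = 0"
        by (simp add: Gamma_zero)
      show "\<mu>' * ((norm \<eta>)\<^sup>2 + min (V x) m) \<le> Gamma s A b c V x \<eta> - V x + min (V x) m" for \<eta>
        using elim \<open>x \<in> \<Omega>\<close> by (simp add: Gamma_eq_inner)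
    qed (rule \<open>0 < m\<close>)
    then show "\<mu>' * ((norm \<xi>)\<^sup>2 + V x) \<le> Gamma s A b c V x \<xi>"
      by simp
  qed
qed

lemma drift_bound_truncate:
  assumes "Linfty \<Omega> b" and "Linfty \<Omega> c" and "0 < M"
    and "AE_on \<Omega> (\<lambda>x. norm (b x - c x) \<le> M * sqrt (V x))"
  shows "\<forall>\<^sub>F m in at_top. AE_on \<Omega> (\<lambda>x. norm (b x - c x) \<le> M * sqrt (min (V x) m))"
proof -
  obtain Cb Cc where "AE_on \<Omega> (\<lambda>x. norm (b x) \<le> Cb)" and "AE_on \<Omega> (\<lambda>x. norm (c x) \<le> Cc)"
    using assms(1,2) by (auto simp: Linfty_def)
  show ?thesis
    using eventually_ge_at_top[of "((Cb + Cc) / M)\<^sup>2"]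
  proof eventually_elim
    case (elim m)
    then have "(Cb + Cc) / M \<le> sqrt m"
      by (rule real_le_rsqrt)
    then have level: "Cb + Cc \<le> M * sqrt m"
      using \<open>0 < M\<close> by (simp add: field_simps)
    from \<open>AE_on \<Omega> (\<lambda>x. norm (b x) \<le> Cb)\<close> \<open>AE_on \<Omega> (\<lambda>x. norm (c x) \<le> Cc)\<close> assms(4)
    show ?case
    proof eventually_elim
      case (elim x)
      show ?case
      proof
        assume "x \<in> \<Omega>"
        show "norm (b x - c x) \<le> M * sqrt (min (V x) m)"
        proof (cases "V x \<le> m")
          case True
          then show ?thesis using elim \<open>x \<in> \<Omega>\<close> by simp
        next
          case False
          have "norm (b x - c x) \<le> Cb + Cc"
            using elim \<open>x \<in> \<Omega>\<close> norm_triangle_ineq4[of "b x" "c x"] by linarith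
          then show ?thesis using level False by simp
        qed
      qed
    qed
  qed
qed

lemma L1loc_min:
  assumes "L1loc \<Omega> V"
  shows "L1loc \<Omega> (\<lambda>x. min (V x) m)"
  unfolding L1loc_def
proof (intro allI impI)
  fix K :: "(real^'a) set"
  assume K: "compact K \<and> K \<subseteq> \<Omega>"
  then have "integrable lebesgue (\<lambda>x. indicator K x *\<^sub>R V x)"
    using assms by (simp add: L1loc_def set_integrable_def)
  moreover have "integrable lebesgue (\<lambda>x. indicator K x *\<^sub>R m)"
    using K lmeasurable_compact[of K]
    by (intro integrable_scaleR_left integrable_real_indicator) (auto simp: fmeasurable_def)
  ultimately have "integrable lebesgue (\<lambda>x. min (indicator K x *\<^sub>R V x) (indicator K x *\<^sub>R m))"
    by (rule integrable_min)
  also have "(\<lambda>x. min (indicator K x *\<^sub>R V x) (indicator K x *\<^sub>R m)) = (\<lambda>x. indicator K x *\<^sub>R min (V x) m)"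
    by (auto simp: indicator_def)
  finally show "set_integrable lebesgue K (\<lambda>x. min (V x) m)"
    by (simp add: set_integrable_def)
qed

lemma quadruple_truncate:
  assumes "quadruple \<Omega> A b c V" and "0 \<le> m"
  shows "quadruple \<Omega> A b c (\<lambda>x. min (V x) m)"
  using assms L1loc_min unfolding quadruple_def by (auto elim!: AE_mp)

lemma coercive_bdd_above:
  assumes "open \<Omega>" and "\<Omega> \<noteq> {}" and "ellipticA \<Omega> A"
  shows "bdd_above {\<mu>'. coercive s \<Omega> A b c V \<mu>'}"
proof -
  obtain lam \<Lambda> where "AE_on \<Omega> (\<lambda>x. \<forall>\<xi> \<sigma>. lam * (norm \<xi>)\<^sup>2 \<le> Re (cinner (A x *v \<xi>) \<xi>) \<and>
                             cmod (cinner (A x *v \<xi>) \<sigma>) \<le> \<Lambda> * norm \<xi> * norm \<sigma>)"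
    using assms(3) unfolding ellipticA_def by blast
  then have \<Lambda>: "AE_on \<Omega> (\<lambda>x. \<forall>\<xi> \<sigma>. cmod (cinner (A x *v \<xi>) \<sigma>) \<le> \<Lambda> * norm \<xi> * norm \<sigma>)"
    by (auto elim: eventually_mono)
  obtain e :: "complex^'a" where "norm e = 1"
    using vector_choose_size zero_le_one by blast
  define K where "K = \<bar>s / 2\<bar> * (1 + \<bar>1 - 2 / s\<bar>)"
  have "\<mu>' \<le> \<bar>\<Lambda>\<bar> * K" if "coercive s \<Omega> A b c V \<mu>'" for \<mu>'
  proof -
    from \<Lambda> that[unfolded coercive_def]
    have "AE_on \<Omega> (\<lambda>x. (\<forall>\<xi> \<sigma>. cmod (cinner (A x *v \<xi>) \<sigma>) \<le> \<Lambda> * norm \<xi> * norm \<sigma>) \<and>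
                       (\<forall>\<xi>. \<mu>' * ((norm \<xi>)\<^sup>2 + V x) \<le> Gamma s A b c V x \<xi>))"
      by eventually_elim blast
    then obtain x where bound: "\<forall>\<xi> \<sigma>. cmod (cinner (A x *v \<xi>) \<sigma>) \<le> \<Lambda> * norm \<xi> * norm \<sigma>"
      and coercive_x: "\<forall>\<xi>. \<mu>' * ((norm \<xi>)\<^sup>2 + V x) \<le> Gamma s A b c V x \<xi>"
      by (rule AE_on_open_obtain[OF assms(1,2)]) blast
    have "\<mu>' = \<mu>' * (norm e)\<^sup>2"
      using \<open>norm e = 1\<close> by simp
    also have "\<dots> \<le> inner (A x *v e) (Jop s e)"
      using coercive_x
      by (intro coercive_form_principal_part[OF Gamma_principal_part_hom
            inner_scaleR_right[of "b x + Jop s (c x)"], where v = "V x"]) (simp add: Gamma_eq_inner)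
    also have "\<dots> \<le> cmod (cinner (A x *v e) (Jop s e))"
      unfolding Re_cinner[symmetric] by (rule complex_Re_le_cmod)
    also have "\<dots> \<le> \<Lambda> * norm e * norm (Jop s e)"
      using bound by blast
    also have "\<dots> \<le> \<bar>\<Lambda>\<bar> * K"
    proof -
      have "\<Lambda> * norm (Jop s e) \<le> \<bar>\<Lambda>\<bar> * norm (Jop s e)"
        by (simp add: mult_right_mono)
      also have "\<dots> \<le> \<bar>\<Lambda>\<bar> * K"
        using norm_Jop_le[of s e] \<open>norm e = 1\<close> unfolding K_def by (intro mult_left_mono) simp_all
      finally show ?thesis
        using \<open>norm e = 1\<close> by simp
    qed
    finally show ?thesis .
  qed
  then show ?thesis
    by (auto simp: bdd_above_def)
qed

lemma classB_truncate:
  assumes "classB \<mu> M \<Omega> A b c V" and "0 < M" and "0 < \<epsilon>"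
  shows "\<forall>\<^sub>F m in at_top. classB (\<mu> - \<epsilon>) M \<Omega> A b c (\<lambda>x. min (V x) m)"
proof -
  have q: "quadruple \<Omega> A b c V" and "coercive 2 \<Omega> A b c V \<mu>"
    and "AE_on \<Omega> (\<lambda>x. norm (b x - c x) \<le> M * sqrt (V x))"
    using assms(1) by (auto simp: classB_def coercive_def elim: eventually_mono)
  then have "\<forall>\<^sub>F m in at_top. coercive 2 \<Omega> A b c (\<lambda>x. min (V x) m) (\<mu> - \<epsilon>)"
    and "\<forall>\<^sub>F m in at_top. AE_on \<Omega> (\<lambda>x. norm (b x - c x) \<le> M * sqrt (min (V x) m))"
    using coercive_truncate drift_bound_truncate \<open>0 < M\<close> \<open>0 < \<epsilon>\<close>
    by (auto simp: quadruple_def)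
  moreover have "\<forall>\<^sub>F m in at_top. 0 \<le> (m::real)"
    by (rule eventually_ge_at_top)
  ultimately show ?thesis
  proof eventually_elim
    case (elim m)
    from elim(1)[unfolded coercive_def] elim(2)
    have "AE_on \<Omega> (\<lambda>x. (\<forall>\<xi>. (\<mu> - \<epsilon>) * ((norm \<xi>)\<^sup>2 + min (V x) m)
                                \<le> Gamma 2 A b c (\<lambda>x. min (V x) m) x \<xi>) \<and>
                        norm (b x - c x) \<le> M * sqrt (min (V x) m))"
      by eventually_elim blast
    then show ?case
      using quadruple_truncate[OF q elim(3)] by (simp add: classB_def)
  qed
qed

lemma classS_truncate:
  assumes "classS s \<Omega> A b c V"
  shows "\<forall>\<^sub>F m in at_top. classS s \<Omega> A b c (\<lambda>x. min (V x) m)"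
proof -
  obtain \<mu>' M' where "0 < \<mu>'" and "coercive s \<Omega> A b c V \<mu>'" and "0 < M'"
    and "AE_on \<Omega> (\<lambda>x. norm (b x - c x) \<le> M' * sqrt (V x))"
    using assms by (auto simp: classS_def coercive_def)
  have q: "quadruple \<Omega> A b c V"
    using assms by (simp add: classS_def)
  then have "Linfty \<Omega> b" and "Linfty \<Omega> c" and "AE_on \<Omega> (\<lambda>x. 0 \<le> V x)"
    by (simp_all add: quadruple_def)
  have "\<forall>\<^sub>F m in at_top. coercive s \<Omega> A b c (\<lambda>x. min (V x) m) (\<mu>' - \<mu>' / 2)"
    using \<open>Linfty \<Omega> b\<close> \<open>Linfty \<Omega> c\<close> \<open>AE_on \<Omega> (\<lambda>x. 0 \<le> V x)\<close> \<open>coercive s \<Omega> A b c V \<mu>'\<close>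
    by (rule coercive_truncate) (simp add: \<open>0 < \<mu>'\<close>)
  moreover have "\<forall>\<^sub>F m in at_top. AE_on \<Omega> (\<lambda>x. norm (b x - c x) \<le> M' * sqrt (min (V x) m))"
    by (rule drift_bound_truncate) fact+
  moreover have "\<forall>\<^sub>F m in at_top. 0 \<le> (m::real)"
    by (rule eventually_ge_at_top)
  ultimately show ?thesis
  proof eventually_elim
    case (elim m)
    show ?case
      unfolding classS_def
    proof (intro conjI)
      show "quadruple \<Omega> A b c (\<lambda>x. min (V x) m)"
        using quadruple_truncate[OF q elim(3)] .
      show "ellipticA_s s \<Omega> A"
        using assms by (simp add: classS_def)
      show "\<exists>M'>0. AE_on \<Omega> (\<lambda>x. norm (b x - c x) \<le> M' * sqrt (min (V x) m))"
        using \<open>0 < M'\<close> elim(2) by blast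
      show "\<exists>\<mu>''>0. AE_on \<Omega> (\<lambda>x. \<forall>\<xi>. Gamma s A b c (\<lambda>x. min (V x) m) x \<xi>
                                     \<ge> \<mu>'' * ((norm \<xi>)\<^sup>2 + min (V x) m))"
        using \<open>0 < \<mu>'\<close> elim(1) unfolding coercive_def by (intro exI[of _ "\<mu>' - \<mu>' / 2"]) simp
    qed
  qed
qed

lemma mu_s_truncate_tendsto:
  assumes "open \<Omega>" and "\<Omega> \<noteq> {}" and S: "classS s \<Omega> A b c V"
  shows "((\<lambda>m. mu_s s \<Omega> A b c (\<lambda>x. min (V x) m)) \<longlongrightarrow> mu_s s \<Omega> A b c V) at_top"
proof -
  have "ellipticA \<Omega> A"
    using S by (simp add: classS_def ellipticA_s_def)
  have bdd: "bdd_above {\<mu>'. 0 < \<mu>' \<and> coercive s \<Omega> A b c W \<mu>'}" for W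
    by (rule bdd_above_mono[OF coercive_bdd_above[OF assms(1,2) \<open>ellipticA \<Omega> A\<close>]]) blast
  have nonempty: "{\<mu>'. 0 < \<mu>' \<and> coercive s \<Omega> A b c W \<mu>'} \<noteq> {}" if "classS s \<Omega> A b c W" for W
    using that by (auto simp: classS_def coercive_def)
  show ?thesis
  proof (rule order_tendstoI)
    fix a
    assume "a < mu_s s \<Omega> A b c V"
    then obtain \<mu>' where "0 < \<mu>'" and "coercive s \<Omega> A b c V \<mu>'" and "a < \<mu>'"
      using less_cSup_iff[OF nonempty[OF S] bdd] by (auto simp: mu_s_eq_Sup_coercive)
    define \<delta> where "\<delta> = (\<mu>' - max a 0) / 2"
    have "0 < \<delta>" and "a < \<mu>' - \<delta>" and "0 < \<mu>' - \<delta>"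
      using \<open>0 < \<mu>'\<close> \<open>a < \<mu>'\<close> by (auto simp: \<delta>_def max_def field_simps)
    have "\<forall>\<^sub>F m in at_top. coercive s \<Omega> A b c (\<lambda>x. min (V x) m) (\<mu>' - \<delta>)"
      using coercive_truncate \<open>coercive s \<Omega> A b c V \<mu>'\<close> \<open>0 < \<delta>\<close> S
      by (auto simp: classS_def quadruple_def)
    then show "\<forall>\<^sub>F m in at_top. a < mu_s s \<Omega> A b c (\<lambda>x. min (V x) m)"
    proof eventually_elim
      case (elim m)
      then have "\<mu>' - \<delta> \<le> mu_s s \<Omega> A b c (\<lambda>x. min (V x) m)"
        using \<open>0 < \<mu>' - \<delta>\<close> unfolding mu_s_eq_Sup_coercive by (intro cSup_upper bdd) auto
      then show ?case
        using \<open>a < \<mu>' - \<delta>\<close> by linarith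
    qed
  next
    fix a
    assume "mu_s s \<Omega> A b c V < a"
    have "\<forall>\<^sub>F m in at_top. classS s \<Omega> A b c (\<lambda>x. min (V x) m) \<and> 0 < m"
      using classS_truncate[OF S] eventually_gt_at_top by (rule eventually_conj)
    then show "\<forall>\<^sub>F m in at_top. mu_s s \<Omega> A b c (\<lambda>x. min (V x) m) < a"
    proof eventually_elim
      case (elim m)
      have "{\<mu>'. 0 < \<mu>' \<and> coercive s \<Omega> A b c (\<lambda>x. min (V x) m) \<mu>'}
              \<subseteq> {\<mu>'. 0 < \<mu>' \<and> coercive s \<Omega> A b c V \<mu>'}"
        using coercive_untruncate elim by blast
      then have "mu_s s \<Omega> A b c (\<lambda>x. min (V x) m) \<le> mu_s s \<Omega> A b c V"
        unfolding mu_s_eq_Sup_coercive using elim by (intro cSup_subset_mono nonempty bdd) blast+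
      then show ?case
        using \<open>mu_s s \<Omega> A b c V < a\<close> by linarith
    qed
  qed
qed

lemma classS_truncate_mu_s:
  assumes "open \<Omega>" and "\<Omega> \<noteq> {}" and S: "classS s \<Omega> A b c V" and "0 < \<epsilon>"
  shows "\<forall>\<^sub>F m in at_top. classS s \<Omega> A b c (\<lambda>x. min (V x) m) \<and>
                          mu_s s \<Omega> A b c V - \<epsilon> \<le> mu_s s \<Omega> A b c (\<lambda>x. min (V x) m)"
proof -
  have "\<forall>\<^sub>F m in at_top. mu_s s \<Omega> A b c V - \<epsilon> < mu_s s \<Omega> A b c (\<lambda>x. min (V x) m)"
    using mu_s_truncate_tendsto[OF assms(1-3)] \<open>0 < \<epsilon>\<close> by (intro order_tendstoD(1)) auto
  with classS_truncate[OF S] show ?thesis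
    by eventually_elim simp
qed

lemma eventually_at_top_imp_nat:
  assumes "\<forall>\<^sub>F m in at_top. P (m::real)"
  shows "\<exists>m0::nat. \<forall>m::nat. m \<ge> 1 \<and> m \<ge> m0 \<longrightarrow> P (real m)"
  using eventually_compose_filterlim[OF assms filterlim_real_sequentially]
  by (auto simp: eventually_sequentially)

theorem lemmaC1:
  fixes \<Omega> :: "(real^'n) set"
    and A :: "real^'n \<Rightarrow> complex^'n^'n"
    and b c :: "real^'n \<Rightarrow> complex^'n"
    and V :: "real^'n \<Rightarrow> real"
    and \<mu> M p q :: real
  assumes "open \<Omega>" and "\<Omega> \<noteq> {}"
    and "0 < \<mu>" and "\<mu> \<le> 1" and "0 < M"
    and hB: "classB \<mu> M \<Omega> A b c V"
    and "1 < p" and q_def: "q = p / (p - 1)"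
  defines "Vm \<equiv> (\<lambda>(m::nat) x. min (V x) (real m))"
  shows
    "(\<forall>\<epsilon>. 0 < \<epsilon> \<and> \<epsilon> < \<mu> \<longrightarrow>
        (\<exists>m0::nat. \<forall>m::nat. m \<ge> 1 \<and> m \<ge> m0 \<longrightarrow> classB (\<mu> - \<epsilon>) M \<Omega> A b c (Vm m)))
   \<and> (classS p \<Omega> A b c V \<longrightarrow>
        (\<forall>\<epsilon>. 0 < \<epsilon> \<and> \<epsilon> < mu_s p \<Omega> A b c V \<longrightarrow>
           (\<exists>m0::nat. \<forall>m::nat. m \<ge> 1 \<and> m \<ge> m0 \<longrightarrow>
              classS p \<Omega> A b c (Vm m) \<and>
              mu_s p \<Omega> A b c (Vm m) \<ge> mu_s p \<Omega> A b c V - \<epsilon>))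
        \<and> (\<lambda>m. mu_s p \<Omega> A b c (Vm m)) \<longlonglongrightarrow> mu_s p \<Omega> A b c V)
   \<and> (classS p \<Omega> A b c V \<and> classS q \<Omega> A b c V \<longrightarrow>
        (\<exists>m0::nat. \<forall>m::nat. m \<ge> 1 \<and> m \<ge> m0 \<longrightarrow> classBp p \<Omega> A b c (Vm m)))"
proof -
  have "\<exists>m0::nat. \<forall>m::nat. m \<ge> 1 \<and> m \<ge> m0 \<longrightarrow> classB (\<mu> - \<epsilon>) M \<Omega> A b c (Vm m)"
    if "0 < \<epsilon>" for \<epsilon>
    unfolding Vm_def using classB_truncate[OF hB \<open>0 < M\<close> that] by (rule eventually_at_top_imp_nat)
  moreover have "\<exists>m0::nat. \<forall>m::nat. m \<ge> 1 \<and> m \<ge> m0 \<longrightarrow>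
                   classS p \<Omega> A b c (Vm m) \<and> mu_s p \<Omega> A b c (Vm m) \<ge> mu_s p \<Omega> A b c V - \<epsilon>"
    if "classS p \<Omega> A b c V" and "0 < \<epsilon>" for \<epsilon>
    unfolding Vm_def using classS_truncate_mu_s[OF \<open>open \<Omega>\<close> \<open>\<Omega> \<noteq> {}\<close> that]
    by (rule eventually_at_top_imp_nat)
  moreover have "(\<lambda>m. mu_s p \<Omega> A b c (Vm m)) \<longlonglongrightarrow> mu_s p \<Omega> A b c V"
    if "classS p \<Omega> A b c V"
    unfolding Vm_def
    using mu_s_truncate_tendsto[OF \<open>open \<Omega>\<close> \<open>\<Omega> \<noteq> {}\<close> that] filterlim_real_sequentially
    by (rule filterlim_compose)
  moreover have "\<exists>m0::nat. \<forall>m::nat. m \<ge> 1 \<and> m \<ge> m0 \<longrightarrow> classBp p \<Omega> A b c (Vm m)"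
    if "classS p \<Omega> A b c V" and "classS q \<Omega> A b c V"
  proof -
    from classS_truncate[OF that(1)] classS_truncate[OF that(2)]
    have "\<forall>\<^sub>F m in at_top. classBp p \<Omega> A b c (\<lambda>x. min (V x) m)"
      by eventually_elim (simp add: classBp_def q_def)
    then show ?thesis
      unfolding Vm_def by (rule eventually_at_top_imp_nat)
  qed
  ultimately show ?thesis
    by blast
qed

end
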